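(* Let $n$ be a positive integer and let $p>n+1$ be a prime. Define the polynomial $$F_n(x)=\sum_{0<i_1<\cdots<i_n<p}\frac{x^{i_1}}{i_1\cdots i_n}\in\mathbb{Z}_p[x],$$ where the sum ranges over integers $i_1,\dots,i_n$. Then $$F_n(1-x)\equiv(-1)^{n-1}F_n(x)\pmod p,$$ i.e., every coefficient of the polynomial $F_n(1-x)-(-1)^{n-1}F_n(x)$ is divisible by $p$ in $\mathbb{Z}_p$.
   Context: $\mathbb{Z}_p$ denotes the ring of $p$-adic integers (the integral ring of the $p$-adic field $\mathbb{Q}_p$); the coefficients $1/(i_1\cdots i_n)$ lie in $\mathbb{Z}_p$ since each $i_j<p$. *)

theory Defs
  imports "HOL-Computational_Algebra.Polynomial" "HOL-Computational_Algebra.Primes"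
begin

text \<open>F_n(x) = sum over 0 < i_1 < ... < i_n < p of x^(i_1) / (i_1 ... i_n),
  as a polynomial with rational coefficients (all of which lie in Z_(p) = Q \<inter> Z_p).
  A strictly increasing tuple (i_1,...,i_n) is the same as an n-element subset S
  of {1..p-1}; then i_1 = Min S and i_1...i_n = prod S.\<close>
definition F :: "nat \<Rightarrow> nat \<Rightarrow> rat poly" where
  "F n p = (\<Sum>S\<in>{S. S \<subseteq> {1..<p} \<and> card S = n}.
              monom (1 / of_nat (\<Prod>S)) (Min S))"

text \<open>A rational q is divisible by p in Z_p iff q = p * a / b with a, b integers
  and p not dividing b.\<close>
definition p_divisible :: "nat \<Rightarrow> rat \<Rightarrow> bool" where
  "p_divisible p q \<longleftrightarrow>
     (\<exists>a b :: int. b \<noteq> 0 \<and> \<not> (int p dvd b) \<and> q = of_int (int p * a) / of_int b)"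

end

theory Submission
  imports Defs
begin

text \<open>Write L = x(1 - x) and e_k for the k-th elementary symmetric function of
  1, 1/2, ..., 1/(p - 1). Comparing coefficients gives L F_1' = x - x^p and
  L F_(n+1)' = e_n x - F_n. Since L is invariant under x \<mapsto> 1 - x, the defect G_n(x) = F_n(1 - x) - (-1)^(n-1) F_n(x) satisfies
  L G_1' = (1 - x)^p - 1 + x^p and L G_(n+1)' = G_n - e_n ((1 - x) + (-1)^(n+1) x).
  The first right-hand side vanishes mod p by the Frobenius congruence. In the others, e_n vanishes
  mod p for 1 <= n <= p - 2: the polynomial R = x (1 + x) (1 + x/2) ... (1 + x/(p - 1)) is
  x (x + 1) ... (x + p - 1) / (p - 1)!, so R(x) - R(x - 1) = p R(x - 1) / (x - 1), and comparing
  coefficients determines those of R mod p from the top down. Hence L G_n' = 0 mod p by induction;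
  cancelling L and integrating coefficientwise (deg G_n < p) leaves G_n = G_n(0) = F_n(1) = e_n = 0
  mod p.\<close>

lemma sum_subsets_insert:
  assumes "finite A" "a \<notin> A"
  shows "(\<Sum>B | B \<subseteq> insert a A \<and> card B = Suc k. f B) =
         (\<Sum>B | B \<subseteq> A \<and> card B = Suc k. f B) + (\<Sum>B | B \<subseteq> A \<and> card B = k. f (insert a B))"
proof -
  have subsets: "{B. B \<subseteq> insert a A \<and> card B = Suc k} =
      {B. B \<subseteq> A \<and> card B = Suc k} \<union> insert a ` {B. B \<subseteq> A \<and> card B = k}"
  proof (intro equalityI subsetI)
    fix B assume "B \<in> {B. B \<subseteq> insert a A \<and> card B = Suc k}"
    moreover from this have "finite B"
      using assms(1) finite_subset by auto
    ultimately show "B \<in> {B. B \<subseteq> A \<and> card B = Suc k} \<union> insert a ` {B. B \<subseteq> A \<and> card B = k}"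
      by (cases "a \<in> B") (auto intro!: image_eqI[of B _ "B - {a}"])
  qed (use assms in \<open>auto simp: card_insert_if finite_subset\<close>)
  have "inj_on (insert a) {B. B \<subseteq> A \<and> card B = k}"
    using assms by (intro inj_onI) (metis insert_ident mem_Collect_eq subsetD)
  then show ?thesis
    unfolding subsets using assms
    by (subst sum.union_disjoint) (auto simp: sum.reindex)
qed

lemma coeff_prod_linear_factors:
  fixes c :: "'a \<Rightarrow> 'b :: comm_semiring_1"
  assumes "finite A"
  shows "coeff (\<Prod>i\<in>A. [:1, c i:]) k = (\<Sum>B | B \<subseteq> A \<and> card B = k. \<Prod>i\<in>B. c i)"
  using assms
proof (induction A arbitrary: k rule: finite_induct)
  case empty
  have subsets: "{B. B \<subseteq> {} \<and> card B = k} = (if k = 0 then {{}} else {})"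
    by auto
  show ?case
    unfolding subsets by (simp add: coeff_1)
next
  case (insert a A)
  have prod_insert: "prod c (insert a B) = c a * prod c B" if "B \<subseteq> A" for B
    using insert.hyps that finite_subset by (subst prod.insert) auto
  show ?case
  proof (cases k)
    case 0
    have "{B. B \<subseteq> A' \<and> card B = 0} = {{}}" if "finite A'" for A' :: "'a set"
      using that by (auto simp: finite_subset)
    then show ?thesis
      using insert 0 by simp
  next
    case (Suc j)
    have "coeff (\<Prod>i\<in>insert a A. [:1, c i:]) k
        = coeff (\<Prod>i\<in>A. [:1, c i:]) (Suc j) + c a * coeff (\<Prod>i\<in>A. [:1, c i:]) j"
      using insert.hyps Suc by simp
    also have "\<dots> = (\<Sum>B | B \<subseteq> A \<and> card B = Suc j. prod c B) +
        (\<Sum>B | B \<subseteq> A \<and> card B = j. prod c (insert a B))"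
      using insert.IH prod_insert by (simp add: sum_distrib_left)
    also have "\<dots> = (\<Sum>B | B \<subseteq> insert a A \<and> card B = k. \<Prod>i\<in>B. c i)"
      using insert.hyps Suc by (simp add: sum_subsets_insert)
    finally show ?thesis .
  qed
qed

lemma pcompose_monom: "pcompose (monom c n) Q = smult c (Q ^ n)"
proof -
  have "pcompose ([:0, 1:] ^ n) Q = Q ^ n"
    by (induction n) (simp_all add: pcompose_mult pcompose_pCons pcompose_1)
  then show ?thesis
    by (simp add: monom_altdef pcompose_smult)
qed

lemma pcompose_eq_sum_smult_power:
  assumes "degree R \<le> d"
  shows "pcompose R Q = (\<Sum>i\<le>d. smult (coeff R i) (Q ^ i))"
proof -
  have "pcompose R Q = pcompose (\<Sum>i\<le>d. monom (coeff R i) i) Q"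
    using poly_as_sum_of_monoms'[OF assms] by simp
  then show ?thesis
    by (simp add: pcompose_sum pcompose_monom)
qed

lemma coeff_diff_pcompose_shift:
  fixes R :: "'a :: comm_ring_1 poly"
  assumes "degree R \<le> d" "j < d"
  shows "coeff (R - pcompose R [:-1, 1:]) j =
    - (\<Sum>m\<in>{Suc j..d}. coeff R m * of_nat (m choose j) * (-1) ^ (m - j))"
proof -
  define t where "t m = coeff R m * of_nat (m choose j) * (-1) ^ (m - j)" for m
  have "coeff ([:-1, 1:] ^ m) j = of_nat (m choose j) * (-1 :: 'a) ^ (m - j)" for m
  proof (cases "j \<le> m")
    case False
    then have "coeff ([:-1, 1:] ^ m) j = (0 :: 'a)"
      by (intro coeff_eq_0) (simp add: degree_linear_power)
    with False show ?thesis
      by (simp add: binomial_eq_0)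
  qed (simp add: coeff_linear_poly_power)
  then have "coeff (pcompose R [:-1, 1:]) j = (\<Sum>m\<le>d. t m)"
    by (simp add: pcompose_eq_sum_smult_power[OF assms(1)] coeff_sum t_def mult.assoc)
  also have "\<dots> = (\<Sum>m\<in>{j..d}. t m)"
    by (rule sum.mono_neutral_right) (auto simp: t_def binomial_eq_0)
  also have "\<dots> = coeff R j + (\<Sum>m\<in>{Suc j..d}. t m)"
    using assms(2) by (simp add: sum.atLeast_Suc_atMost t_def)
  finally show ?thesis
    by (simp add: t_def)
qed

lemma coeff_pCons_0_const: "coeff [:0, c:] k = (if k = 1 then c else 0)"
  by (simp add: coeff_pCons split: nat.split)

lemma coeff_x_one_minus_x_pderiv:
  fixes P :: "'a :: idom poly"
  shows "coeff ([:0, 1, -1:] * pderiv P) k =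
    of_nat k * coeff P k - of_nat (k - 1) * coeff P (k - 1)"
  by (cases k; cases "k - 1") (simp_all add: coeff_pderiv)

lemma x_one_minus_x_pderiv_reflect:
  fixes P :: "'a :: idom poly"
  shows "[:0, 1, -1:] * pderiv (pcompose P [:1, -1:] - smult s P) =
    - pcompose ([:0, 1, -1:] * pderiv P) [:1, -1:] - smult s ([:0, 1, -1:] * pderiv P)"
proof -
  have "pderiv (pcompose P [:1, -1:] - smult s P) =
      - pcompose (pderiv P) [:1, -1:] - smult s (pderiv P)"
    by (simp add: pderiv_diff pderiv_pcompose pderiv_smult pderiv_pCons)
  moreover have "pcompose [:0, 1, -1:] [:1, -1:] = [:0, 1, -1 :: 'a:]"
    by (simp add: pcompose_pCons)
  ultimately show ?thesis
    by (metis (no_types, lifting) mult_minus_right mult_smult_right pcompose_mult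
        right_diff_distrib)
qed

section \<open>Rationals that are integral at p\<close>

definition p_integral :: "nat \<Rightarrow> rat set" where
  "p_integral p = {q. \<exists>a b :: int. b \<noteq> 0 \<and> \<not> int p dvd b \<and> q = of_int a / of_int b}"

lemma p_integralI: "b \<noteq> 0 \<Longrightarrow> \<not> int p dvd b \<Longrightarrow> q = of_int a / of_int b \<Longrightarrow> q \<in> p_integral p"
  unfolding p_integral_def by blast

lemma p_integralE:
  assumes "q \<in> p_integral p"
  obtains a b :: int where "b \<noteq> 0" "\<not> int p dvd b" "q = of_int a / of_int b"
  using assms unfolding p_integral_def by blast

lemma p_integral_of_int: "prime p \<Longrightarrow> of_int a \<in> p_integral p"
  by (rule p_integralI[of 1 _ _ a]) (auto simp: prime_gt_1_nat)

lemma p_integral_of_nat: "prime p \<Longrightarrow> of_nat k \<in> p_integral p"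
  using p_integral_of_int[of p "int k"] by simp

lemma p_integral_0: "prime p \<Longrightarrow> 0 \<in> p_integral p"
  using p_integral_of_int[of p 0] by simp

lemma p_integral_1: "prime p \<Longrightarrow> 1 \<in> p_integral p"
  using p_integral_of_int[of p 1] by simp

lemma p_integral_add:
  assumes "prime p" "x \<in> p_integral p" "y \<in> p_integral p"
  shows "x + y \<in> p_integral p"
proof -
  obtain a b where ab: "b \<noteq> 0" "\<not> int p dvd b" "x = of_int a / of_int b"
    using assms(2) by (rule p_integralE)
  obtain c d where cd: "d \<noteq> 0" "\<not> int p dvd d" "y = of_int c / of_int d"
    using assms(3) by (rule p_integralE)
  have "\<not> int p dvd b * d"
    using ab cd assms(1) by (simp add: prime_dvd_mult_iff)
  moreover have "x + y = of_int (a * d + c * b) / of_int (b * d)"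
    using ab cd by (simp add: field_simps)
  ultimately show ?thesis
    using ab cd by (intro p_integralI[of "b * d" p _ "a * d + c * b"]) auto
qed

lemma p_integral_mult:
  assumes "prime p" "x \<in> p_integral p" "y \<in> p_integral p"
  shows "x * y \<in> p_integral p"
proof -
  obtain a b where ab: "b \<noteq> 0" "\<not> int p dvd b" "x = of_int a / of_int b"
    using assms(2) by (rule p_integralE)
  obtain c d where cd: "d \<noteq> 0" "\<not> int p dvd d" "y = of_int c / of_int d"
    using assms(3) by (rule p_integralE)
  have "\<not> int p dvd b * d"
    using ab cd assms(1) by (simp add: prime_dvd_mult_iff)
  moreover have "x * y = of_int (a * c) / of_int (b * d)"
    using ab cd by simp
  ultimately show ?thesis
    using ab cd by (intro p_integralI[of "b * d" p _ "a * c"]) auto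
qed

lemma p_integral_uminus: "prime p \<Longrightarrow> x \<in> p_integral p \<Longrightarrow> - x \<in> p_integral p"
  using p_integral_mult[of p "-1" x] p_integral_of_int[of p "-1"] by simp

lemma p_integral_diff: "prime p \<Longrightarrow> x \<in> p_integral p \<Longrightarrow> y \<in> p_integral p \<Longrightarrow> x - y \<in> p_integral p"
  using p_integral_add[of p x "- y"] p_integral_uminus[of p y] by simp

lemma p_integral_power: "prime p \<Longrightarrow> x \<in> p_integral p \<Longrightarrow> x ^ k \<in> p_integral p"
  by (induction k) (auto intro: p_integral_mult p_integral_1)

text \<open>The case i = 0 is included since 1 / 0 = 0.\<close>

lemma p_integral_inverse_of_nat:
  assumes "prime p" "i < p"
  shows "1 / of_nat i \<in> p_integral p"
proof (cases "i = 0")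
  case True
  then show ?thesis
    using assms(1) by (simp add: p_integral_0)
next
  case False
  then have "\<not> int p dvd int i"
    using assms by (auto dest: dvd_imp_le)
  then show ?thesis
    using False by (intro p_integralI[of "int i" _ _ 1]) auto
qed

lemma p_divisible_iff_p_integral:
  assumes "prime p"
  shows "p_divisible p q \<longleftrightarrow> q / of_nat p \<in> p_integral p"
proof -
  have p0: "(of_nat p :: rat) \<noteq> 0"
    using assms by (auto simp: prime_gt_0_nat)
  have "q = of_int (int p * a) / of_int b \<longleftrightarrow> q / of_nat p = of_int a / of_int b" for a b :: int
    using p0 by (auto simp: field_simps)
  then show ?thesis
    unfolding p_divisible_def p_integral_def by simp
qed

lemma p_divisible_0: "prime p \<Longrightarrow> p_divisible p 0"
  by (simp add: p_divisible_iff_p_integral p_integral_0)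

lemma p_divisible_add: "prime p \<Longrightarrow> p_divisible p x \<Longrightarrow> p_divisible p y \<Longrightarrow> p_divisible p (x + y)"
  by (simp add: p_divisible_iff_p_integral add_divide_distrib p_integral_add)

lemma p_divisible_diff: "prime p \<Longrightarrow> p_divisible p x \<Longrightarrow> p_divisible p y \<Longrightarrow> p_divisible p (x - y)"
  by (simp add: p_divisible_iff_p_integral diff_divide_distrib p_integral_diff)

lemma p_divisible_sum:
  "prime p \<Longrightarrow> (\<And>x. x \<in> A \<Longrightarrow> p_divisible p (f x)) \<Longrightarrow> p_divisible p (sum f A)"
  by (induction A rule: infinite_finite_induct) (auto intro: p_divisible_add p_divisible_0)

lemma p_divisible_mult: "prime p \<Longrightarrow> z \<in> p_integral p \<Longrightarrow> p_divisible p x \<Longrightarrow> p_divisible p (z * x)"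
  by (simp add: p_divisible_iff_p_integral) (metis p_integral_mult times_divide_eq_right)

lemma p_divisible_of_nat_p_mult: "prime p \<Longrightarrow> z \<in> p_integral p \<Longrightarrow> p_divisible p (of_nat p * z)"
  by (simp add: p_divisible_iff_p_integral prime_gt_0_nat)

lemma p_divisible_choose_mult:
  assumes "prime p" "0 < j" "j < p" "z \<in> p_integral p"
  shows "p_divisible p (of_nat (p choose j) * z)"
proof -
  obtain c where "p choose j = p * c"
    using dvd_choose_prime[of j p] assms by auto
  then show ?thesis
    using p_divisible_of_nat_p_mult[of p "of_nat c * z"] assms
    by (simp add: p_integral_mult p_integral_of_nat mult.assoc)
qed

lemma p_divisible_cancel_of_nat:
  assumes "prime p" "0 < k" "k < p" "p_divisible p (of_nat k * q)"
  shows "p_divisible p q"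
  using p_divisible_mult[OF assms(1) p_integral_inverse_of_nat[OF assms(1,3)] assms(4)] assms(2)
  by simp

section \<open>Polynomials over the p-integral rationals\<close>

definition p_integral_poly :: "nat \<Rightarrow> rat poly \<Rightarrow> bool" where
  "p_integral_poly p P \<longleftrightarrow> (\<forall>i. coeff P i \<in> p_integral p)"

definition p_divisible_poly :: "nat \<Rightarrow> rat poly \<Rightarrow> bool" where
  "p_divisible_poly p P \<longleftrightarrow> (\<forall>i. p_divisible p (coeff P i))"

lemma p_integral_poly_0: "prime p \<Longrightarrow> p_integral_poly p 0"
  by (simp add: p_integral_poly_def p_integral_0)

lemma p_integral_poly_pCons:
  "c \<in> p_integral p \<Longrightarrow> p_integral_poly p P \<Longrightarrow> p_integral_poly p (pCons c P)"
  by (simp add: p_integral_poly_def coeff_pCons split: nat.split)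

lemma p_integral_poly_mult:
  "prime p \<Longrightarrow> p_integral_poly p P \<Longrightarrow> p_integral_poly p Q \<Longrightarrow> p_integral_poly p (P * Q)"
  unfolding p_integral_poly_def
  by (intro allI coeff_mult_semiring_closed[where R = "p_integral p"])
     (auto intro: p_integral_0 p_integral_add p_integral_mult)

lemma p_integral_poly_pcompose:
  "prime p \<Longrightarrow> p_integral_poly p P \<Longrightarrow> p_integral_poly p Q \<Longrightarrow> p_integral_poly p (pcompose P Q)"
  unfolding p_integral_poly_def
  by (intro allI coeff_pcompose_semiring_closed[where R = "p_integral p"])
     (auto intro: p_integral_0 p_integral_add p_integral_mult)

lemma p_integral_poly_prod:
  "prime p \<Longrightarrow> (\<And>x. x \<in> A \<Longrightarrow> p_integral_poly p (f x)) \<Longrightarrow> p_integral_poly p (prod f A)"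
  by (induction A rule: infinite_finite_induct)
     (auto intro: p_integral_poly_mult p_integral_poly_pCons p_integral_poly_0 p_integral_1
       simp: one_pCons)

lemma p_divisible_poly_diff:
  "prime p \<Longrightarrow> p_divisible_poly p P \<Longrightarrow> p_divisible_poly p Q \<Longrightarrow> p_divisible_poly p (P - Q)"
  by (simp add: p_divisible_poly_def p_divisible_diff)

lemma p_divisible_poly_smult:
  "prime p \<Longrightarrow> p_divisible p c \<Longrightarrow> p_integral_poly p P \<Longrightarrow> p_divisible_poly p (smult c P)"
  unfolding p_divisible_poly_def p_integral_poly_def
  by (metis coeff_smult mult.commute p_divisible_mult)

lemma p_divisible_poly_cancel_x_one_minus_x:
  assumes "prime p" "p_divisible_poly p ([:0, 1, -1:] * Q)"
  shows "p_divisible_poly p Q"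
  unfolding p_divisible_poly_def
proof
  fix k
  show "p_divisible p (coeff Q k)"
  proof (induction k)
    case 0
    have "p_divisible p (coeff ([:0, 1, -1:] * Q) 1)"
      using assms(2) unfolding p_divisible_poly_def ..
    then show ?case
      by simp
  next
    case (Suc k)
    have "p_divisible p (coeff ([:0, 1, -1:] * Q) (Suc (Suc k)))"
      using assms(2) unfolding p_divisible_poly_def ..
    then have "p_divisible p (coeff Q (Suc k) - coeff Q k)"
      by simp
    from p_divisible_add[OF assms(1) this Suc.IH] show ?case
      by simp
  qed
qed

lemma p_divisible_poly_of_pderiv:
  assumes "prime p" "p_divisible_poly p (pderiv G)" "degree G < p" "p_divisible p (coeff G 0)"
  shows "p_divisible_poly p G"
  unfolding p_divisible_poly_def
proof
  fix k
  consider "k = 0" | "0 < k" "k < p" | "p \<le> k"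
    by linarith
  then show "p_divisible p (coeff G k)"
  proof cases
    case 2
    have "p_divisible p (coeff (pderiv G) (k - 1))"
      using assms(2) unfolding p_divisible_poly_def ..
    with 2 have "p_divisible p (of_nat k * coeff G k)"
      by (simp add: coeff_pderiv)
    with 2 show ?thesis
      using assms(1) by (rule_tac p_divisible_cancel_of_nat) auto
  next
    case 3
    then show ?thesis
      using assms by (simp add: coeff_eq_0 p_divisible_0)
  qed (use assms(4) in simp)
qed

lemma p_divisible_poly_linear_power:
  assumes "prime p" "a \<in> p_integral p" "b \<in> p_integral p"
  shows "p_divisible_poly p ([:a, b:] ^ p - [:a ^ p:] - monom (b ^ p) p)"
  unfolding p_divisible_poly_def
proof
  fix j
  consider "j = 0" | "0 < j" "j < p" | "j = p" | "p < j"
    by linarith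
  then show "p_divisible p (coeff ([:a, b:] ^ p - [:a ^ p:] - monom (b ^ p) p) j)"
  proof cases
    case 2
    then obtain i where "j = Suc i"
      using gr0_implies_Suc by blast
    with 2 have "coeff ([:a, b:] ^ p - [:a ^ p:] - monom (b ^ p) p) j =
        of_nat (p choose j) * (b ^ j * a ^ (p - j))"
      by (simp add: coeff_linear_poly_power mult.assoc)
    with 2 show ?thesis
      using assms by (simp add: p_divisible_choose_mult p_integral_mult p_integral_power)
  next
    case 3
    then have "coeff [:a ^ p:] j = 0"
      using prime_gt_0_nat[OF assms(1)] by (simp add: coeff_pCons split: nat.split)
    with 3 show ?thesis
      using assms(1) by (simp add: coeff_linear_poly_power p_divisible_0)
  next
    case 4
    have "degree ([:a, b:] ^ p) \<le> degree [:a, b:] * p"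
      by (rule degree_power_le)
    also have "\<dots> \<le> p"
      by simp
    finally have "coeff ([:a, b:] ^ p) j = 0"
      using 4 by (intro coeff_eq_0) simp
    with 4 show ?thesis
      using assms(1) by (simp add: coeff_pCons p_divisible_0 split: nat.split)
  qed (use assms(1) in \<open>simp add: coeff_linear_poly_power p_divisible_0\<close>)
qed

lemma p_divisible_coeff_of_shift_difference:
  assumes p: "prime p" and R: "p_integral_poly p R" "degree R \<le> p"
    and D: "p_divisible_poly p (R - pcompose R [:-1, 1:])"
  shows "2 \<le> k \<Longrightarrow> k < p \<Longrightarrow> p_divisible p (coeff R k)"
proof (induction "p - k" arbitrary: k rule: less_induct)
  case less
  define j where "j = k - 1"
  have k: "k = Suc j" "0 < j" "j < p"
    using less.prems by (auto simp: j_def)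
  txt \<open>The x^j coefficient of R(x) - R(x - 1) is k r_k minus a combination of r_(k+1), ..., r_p,
    and the coefficient C(p, j) of r_p is divisible by p.\<close>
  define t where "t m = coeff R m * of_nat (m choose j) * (-1) ^ (m - j)" for m
  have sign_binomial: "of_nat (m choose j) * (-1) ^ (m - j) \<in> p_integral p" for m
    using p
    by (intro p_integral_mult p_integral_of_nat p_integral_power p_integral_uminus p_integral_1)
  have tail: "p_divisible p (\<Sum>m\<in>{Suc k..p}. t m)"
  proof (rule p_divisible_sum[OF p])
    fix m assume m: "m \<in> {Suc k..p}"
    show "p_divisible p (t m)"
    proof (cases "m = p")
      case True
      have "coeff R p * (-1) ^ (p - j) \<in> p_integral p"
        using R(1) p unfolding p_integral_poly_def
        by (intro p_integral_mult p_integral_power p_integral_uminus p_integral_1) auto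
      moreover have "t m = of_nat (p choose j) * (coeff R p * (-1) ^ (p - j))"
        using True by (simp add: t_def)
      ultimately show ?thesis
        using p_divisible_choose_mult[OF p k(2,3)] by simp
    next
      case False
      with m have "p_divisible p (coeff R m)"
        using less by auto
      then show ?thesis
        using p_divisible_mult[OF p sign_binomial] by (simp add: t_def mult_ac)
    qed
  qed
  have "coeff (R - pcompose R [:-1, 1:]) j = - (\<Sum>m\<in>{Suc j..p}. t m)"
    unfolding t_def using R(2) k(3) by (rule coeff_diff_pcompose_shift)
  also have "\<dots> = of_nat k * coeff R k - (\<Sum>m\<in>{Suc k..p}. t m)"
    using less.prems k by (simp add: sum.atLeast_Suc_atMost t_def)
  finally have "of_nat k * coeff R k = coeff (R - pcompose R [:-1, 1:]) j + (\<Sum>m\<in>{Suc k..p}. t m)"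
    by simp
  moreover have "p_divisible p (coeff (R - pcompose R [:-1, 1:]) j)"
    using D unfolding p_divisible_poly_def ..
  ultimately have "p_divisible p (of_nat k * coeff R k)"
    using p_divisible_add[OF p _ tail] by simp
  then show ?case
    using p less.prems by (rule_tac p_divisible_cancel_of_nat) auto
qed

section \<open>Elementary symmetric functions of reciprocals\<close>

definition esym_inv :: "nat \<Rightarrow> nat \<Rightarrow> nat \<Rightarrow> rat" where
  "esym_inv p k j = coeff (\<Prod>i\<in>{j..<p}. [:1, 1 / of_nat i:]) k"

lemma esym_inv_eq_sum: "esym_inv p k j = (\<Sum>T | T \<subseteq> {j..<p} \<and> card T = k. 1 / of_nat (\<Prod>T))"
  by (simp add: esym_inv_def coeff_prod_linear_factors prod_dividef)

lemma esym_inv_0: "esym_inv p 0 j = 1"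
proof -
  have "{T. T \<subseteq> {j..<p} \<and> card T = 0} = {{}}"
    by (auto simp: finite_subset)
  then show ?thesis
    by (simp add: esym_inv_eq_sum)
qed

lemma esym_inv_Suc:
  "j < p \<Longrightarrow> esym_inv p (Suc k) j = esym_inv p (Suc k) (Suc j) + esym_inv p k (Suc j) / of_nat j"
  by (simp add: esym_inv_def prod.atLeast_Suc_lessThan)

lemma esym_inv_eq_0: "p \<le> j \<Longrightarrow> esym_inv p (Suc k) j = 0"
  by (simp add: esym_inv_def)

lemma p_integral_poly_prod_inverses:
  "prime p \<Longrightarrow> p_integral_poly p (\<Prod>i\<in>{j..<p}. [:1, 1 / of_nat i:])"
  by (intro p_integral_poly_prod p_integral_poly_pCons p_integral_poly_0 p_integral_1
      p_integral_inverse_of_nat) auto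

lemma prod_inverses_shift:
  assumes "1 \<le> m"
  shows "[:of_nat m - 1, 1:] * pcompose (\<Prod>i\<in>{1..<m}. [:1, 1 / of_nat i:]) [:-1, 1:] =
    [:0, 1:] * (\<Prod>i\<in>{1..<m}. [:1, 1 / (of_nat i :: rat):])"
  using assms
proof (induction m rule: dec_induct)
  case base
  then show ?case
    by (simp add: pcompose_1)
next
  case (step m)
  define P where "P = (\<Prod>i\<in>{1..<m}. [:1, 1 / (of_nat i :: rat):])"
  define Q where "Q = pcompose P [:-1, 1:]"
  have m: "(of_nat m :: rat) \<noteq> 0"
    using step.hyps by simp
  have P_Suc: "(\<Prod>i\<in>{1..<Suc m}. [:1, 1 / (of_nat i :: rat):]) = [:1, 1 / of_nat m:] * P"
    using step.hyps by (simp add: P_def prod.atLeastLessThan_Suc mult.commute)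
  have compose_factor:
      "pcompose [:1, 1 / of_nat m:] [:-1, 1:] = smult (1 / of_nat m) [:of_nat m - 1, 1 :: rat:]"
    using m by (simp add: pcompose_pCons field_simps)
  have scale_factor: "[:of_nat (Suc m) - 1, 1:] = smult (of_nat m) [:1, 1 / of_nat m :: rat:]"
    using m by simp
  have "[:of_nat (Suc m) - 1, 1:] * pcompose (\<Prod>i\<in>{1..<Suc m}. [:1, 1 / of_nat i:]) [:-1, 1:]
      = smult (of_nat m) [:1, 1 / of_nat m :: rat:] *
        (smult (1 / of_nat m) [:of_nat m - 1, 1:] * Q)"
    unfolding P_Suc scale_factor pcompose_mult compose_factor Q_def by (simp add: mult_ac)
  also have "\<dots> = [:1, 1 / of_nat m :: rat:] * ([:of_nat m - 1, 1:] * Q)"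
    using m by (simp only: mult_smult_left mult_smult_right smult_smult) simp
  also have "\<dots> = [:0, 1:] * (\<Prod>i\<in>{1..<Suc m}. [:1, 1 / (of_nat i :: rat):])"
    using step.IH unfolding P_Suc P_def Q_def by (simp add: mult_ac)
  finally show ?case .
qed

lemma esym_inv_p_divisible:
  assumes p: "prime p" and k: "1 \<le> k" "k + 2 \<le> p"
  shows "p_divisible p (esym_inv p k 1)"
proof -
  define P where "P = (\<Prod>i\<in>{1..<p}. [:1, 1 / (of_nat i :: rat):])"
  define R where "R = [:0, 1:] * P"
  define Q where "Q = pcompose P [:-1, 1:]"
  have P: "p_integral_poly p P"
    unfolding P_def using p by (rule p_integral_poly_prod_inverses)
  then have R: "p_integral_poly p R"
    unfolding R_def using p
    by (intro p_integral_poly_mult p_integral_poly_pCons p_integral_poly_0 p_integral_0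
        p_integral_1)
  have "degree P \<le> p - 1"
    unfolding P_def using degree_prod_sum_le[of "{1..<p}" "\<lambda>i. [:1, 1 / (of_nat i :: rat):]"]
    by simp
  then have "degree R \<le> p"
    unfolding R_def using degree_mult_le[of "[:0, 1:]" P] prime_gt_0_nat[OF p] by simp
  moreover have "R - pcompose R [:-1, 1:] = smult (of_nat p) Q"
  proof -
    have "R = [:of_nat p - 1, 1:] * Q"
      unfolding R_def Q_def P_def using prod_inverses_shift[of p] prime_ge_1_nat[OF p] by simp
    moreover have "pcompose R [:-1, 1:] = [:-1, 1:] * Q"
      unfolding R_def Q_def by (simp add: pcompose_mult pcompose_pCons)
    ultimately have "R - pcompose R [:-1, 1:] = ([:of_nat p - 1, 1:] - [:-1, 1:]) * Q"
      by (simp only: left_diff_distrib)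
    then show ?thesis
      by simp
  qed
  moreover have "p_integral_poly p Q"
    unfolding Q_def using p P
    by (intro p_integral_poly_pcompose p_integral_poly_pCons p_integral_poly_0 p_integral_1
        p_integral_uminus)
  ultimately have "p_divisible_poly p (R - pcompose R [:-1, 1:])"
    using p unfolding p_divisible_poly_def p_integral_poly_def
    by (auto intro: p_divisible_of_nat_p_mult)
  then have "p_divisible p (coeff R (Suc k))"
    using p R \<open>degree R \<le> p\<close> k by (intro p_divisible_coeff_of_shift_difference) auto
  then show ?thesis
    by (simp add: R_def P_def esym_inv_def)
qed

section \<open>Coefficients and differential equations of F\<close>

lemma subsets_with_Min:
  "{S. S \<subseteq> {1..<p} \<and> card S = Suc n \<and> Min S = m} =
     (if 0 < m \<and> m < p then insert m ` {T. T \<subseteq> {Suc m..<p} \<and> card T = n} else {})"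
    (is "?S = _")
proof -
  have S: "0 < m \<and> m < p" "S = insert m (S - {m})" "S - {m} \<in> {T. T \<subseteq> {Suc m..<p} \<and> card T = n}"
    if "S \<in> ?S" for S
  proof -
    have fin: "finite S" and ne: "S \<noteq> {}" and sub: "S \<subseteq> {1..<p}"
      using that by (auto intro: finite_subset)
    have "m \<in> S"
      using Min_in[OF fin ne] that by simp
    moreover have "S - {m} \<subseteq> {Suc m..<p}"
    proof
      fix x assume x: "x \<in> S - {m}"
      then have "m < x"
        using Min_le[OF fin, of x] \<open>S \<in> ?S\<close> by auto
      with x sub show "x \<in> {Suc m..<p}"
        by auto
    qed
    ultimately show "0 < m \<and> m < p" "S = insert m (S - {m})"
        "S - {m} \<in> {T. T \<subseteq> {Suc m..<p} \<and> card T = n}"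
      using sub fin that by auto
  qed
  have insert_in: "insert m T \<in> ?S" if "0 < m" "m < p" "T \<subseteq> {Suc m..<p}" "card T = n" for T
  proof -
    have "finite T" "m \<notin> T"
      using that(3) by (auto intro: finite_subset)
    moreover have "Min (insert m T) = m"
      using \<open>finite T\<close> that(3) by (intro Min_eqI) auto
    ultimately show ?thesis
      using that by auto
  qed
  show ?thesis
  proof (cases "0 < m \<and> m < p")
    case True
    have "?S = insert m ` {T. T \<subseteq> {Suc m..<p} \<and> card T = n}"
    proof (intro equalityI subsetI)
      fix S assume "S \<in> ?S"
      with S[OF this] show "S \<in> insert m ` {T. T \<subseteq> {Suc m..<p} \<and> card T = n}"
        by (metis (no_types, lifting) image_eqI)
    qed (use True insert_in in blast)
    with True show ?thesis
      by simp
  next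
    case False
    then show ?thesis
      using S(1) by (simp only: if_False) blast
  qed
qed

lemma coeff_F:
  "coeff (F (Suc n) p) m = (if 0 < m \<and> m < p then esym_inv p n (Suc m) / of_nat m else 0)"
proof -
  let ?S = "{S. S \<subseteq> {1..<p} \<and> card S = Suc n}"
  let ?T = "{T. T \<subseteq> {Suc m..<p} \<and> card T = n}"
  have "coeff (F (Suc n) p) m = (\<Sum>S\<in>?S. if Min S = m then 1 / of_nat (\<Prod>S) else 0)"
    by (simp add: F_def coeff_sum coeff_monom del: of_nat_prod)
  also have "\<dots> = (\<Sum>S\<in>{S \<in> ?S. Min S = m}. 1 / of_nat (\<Prod>S))"
    by (rule sum.inter_filter[symmetric]) (auto intro: finite_subset)
  finally have coeff_eq: "coeff (F (Suc n) p) m = (\<Sum>S\<in>{S \<in> ?S. Min S = m}. 1 / of_nat (\<Prod>S))" .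
  show ?thesis
  proof (cases "0 < m \<and> m < p")
    case True
    have "inj_on (insert m) ?T"
      by (intro inj_onI)
        (metis Suc_n_not_le_n atLeastLessThan_iff insert_ident mem_Collect_eq subsetD)
    moreover have "1 / of_nat (\<Prod>(insert m T)) = 1 / of_nat (\<Prod>T) / (of_nat m :: rat)"
      if "T \<in> ?T" for T
    proof -
      have "finite T" "m \<notin> T"
        using that by (auto intro: finite_subset)
      then show ?thesis
        by simp
    qed
    moreover have "{S \<in> ?S. Min S = m} = insert m ` ?T"
      using True subsets_with_Min[of p n m] by (simp add: conj_assoc)
    ultimately show ?thesis
      using True
      by (simp add: coeff_eq sum.reindex esym_inv_eq_sum sum_divide_distrib del: of_nat_prod)
  next
    case False
    then have no_subsets: "{S \<in> ?S. Min S = m} = {}"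
      using subsets_with_Min[of p n m, unfolded if_not_P[OF False]] by (simp add: conj_assoc)
    show ?thesis
      unfolding coeff_eq no_subsets using False by auto
  qed
qed

lemma of_nat_mult_coeff_F:
  "of_nat m * coeff (F (Suc n) p) m = (if 0 < m \<and> m < p then esym_inv p n (Suc m) else 0)"
  by (simp add: coeff_F)

lemma degree_F_less:
  assumes "0 < p"
  shows "degree (F (Suc n) p) < p"
proof -
  have "degree (F (Suc n) p) \<le> p - 1"
    by (rule degree_le) (auto simp: coeff_F)
  with assms show ?thesis
    by linarith
qed

lemma poly_F_1: "poly (F n p) 1 = esym_inv p n 1"
  by (simp add: F_def poly_sum poly_monom esym_inv_eq_sum)

lemma poly_F_0: "poly (F (Suc n) p) 0 = 0"
  by (simp add: poly_0_coeff_0 coeff_F)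

lemma F_ode_Suc_Suc:
  assumes "1 < p"
  shows "[:0, 1, -1:] * pderiv (F (Suc (Suc n)) p) = [:0, esym_inv p (Suc n) 1:] - F (Suc n) p"
proof (rule poly_eqI)
  fix k
  have lhs: "coeff ([:0, 1, -1:] * pderiv (F (Suc (Suc n)) p)) k =
      (if 0 < k \<and> k < p then esym_inv p (Suc n) (Suc k) else 0) -
      (if 0 < k - 1 \<and> k - 1 < p then esym_inv p (Suc n) k else 0)"
    unfolding coeff_x_one_minus_x_pderiv of_nat_mult_coeff_F by (simp add: Suc_diff_1)
  have rhs: "coeff ([:0, esym_inv p (Suc n) 1:] - F (Suc n) p) k =
      (if k = 1 then esym_inv p (Suc n) 1 else 0) -
      (if 0 < k \<and> k < p then esym_inv p n (Suc k) / of_nat k else 0)"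
    by (simp add: coeff_F coeff_pCons_0_const)
  consider "k = 0" | "k = 1" | "1 < k" "k < p" | "k = p" | "p < k"
    by linarith
  then show "coeff ([:0, 1, -1:] * pderiv (F (Suc (Suc n)) p)) k =
      coeff ([:0, esym_inv p (Suc n) 1:] - F (Suc n) p) k"
  proof cases
    case 1
    then show ?thesis
      unfolding lhs rhs by simp
  next
    case 2
    then show ?thesis
      unfolding lhs rhs using assms esym_inv_Suc[of 1 p n] by simp
  next
    case 3
    then show ?thesis
      unfolding lhs rhs using esym_inv_Suc[of k p n] by (simp add: less_imp_diff_less)
  next
    case 4
    then show ?thesis
      unfolding lhs rhs using assms by (simp add: esym_inv_eq_0)
  next
    case 5
    then show ?thesis
      unfolding lhs rhs using assms by auto
  qed
qed

lemma F_ode_Suc_0: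
  assumes "1 < p"
  shows "[:0, 1, -1:] * pderiv (F (Suc 0) p) = monom 1 1 - monom 1 p"
proof (rule poly_eqI)
  fix k
  have "coeff ([:0, 1, -1:] * pderiv (F (Suc 0) p)) k =
      (if 0 < k \<and> k < p then 1 else 0) - (if 0 < k - 1 \<and> k - 1 < p then 1 else 0)"
    unfolding coeff_x_one_minus_x_pderiv of_nat_mult_coeff_F by (simp add: esym_inv_0)
  also have "\<dots> = coeff (monom 1 1 - monom 1 p) k"
    using assms by (auto simp: coeff_monom)
  finally show "coeff ([:0, 1, -1:] * pderiv (F (Suc 0) p)) k = coeff (monom 1 1 - monom 1 p) k" .
qed

section \<open>The reflection defect\<close>

definition F_defect :: "nat \<Rightarrow> nat \<Rightarrow> rat poly" where
  "F_defect n p = pcompose (F n p) [:1, -1:] - smult ((-1) ^ (n - 1)) (F n p)"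

lemma F_defect_ode_Suc_Suc:
  assumes "1 < p"
  shows "[:0, 1, -1:] * pderiv (F_defect (Suc (Suc n)) p) =
    F_defect (Suc n) p - smult (esym_inv p (Suc n) 1) [:1, (-1) ^ Suc n - 1:]"
  unfolding F_defect_def x_one_minus_x_pderiv_reflect F_ode_Suc_Suc[OF assms]
  by (simp add: pcompose_diff pcompose_pCons smult_diff_right algebra_simps)

lemma F_defect_ode_Suc_0:
  assumes "1 < p"
  shows "[:0, 1, -1:] * pderiv (F_defect (Suc 0) p) = [:1, -1:] ^ p - 1 + monom 1 p"
  unfolding F_defect_def x_one_minus_x_pderiv_reflect F_ode_Suc_0[OF assms]
  by (simp add: pcompose_diff pcompose_monom pcompose_pCons one_pCons monom_Suc)

lemma degree_F_defect_less:
  assumes "0 < p"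
  shows "degree (F_defect (Suc n) p) < p"
proof -
  have "degree (pcompose (F (Suc n) p) [:1, -1:]) < p"
    using degree_pcompose_le[of "F (Suc n) p" "[:1, -1:]"] degree_F_less[OF assms, of n] by simp
  moreover have "degree (smult c (F (Suc n) p)) < p" for c
    using degree_smult_le[of c "F (Suc n) p"] degree_F_less[OF assms, of n] by simp
  ultimately show ?thesis
    unfolding F_defect_def using degree_diff_le_max le_less_trans max_less_iff_conj by blast
qed

lemma coeff_0_F_defect: "coeff (F_defect (Suc n) p) 0 = esym_inv p (Suc n) 1"
  by (simp add: F_defect_def flip: poly_0_coeff_0 add: poly_pcompose poly_F_0 poly_F_1)

lemma F_defect_p_divisible_of_ode:
  assumes p: "prime p" and n: "n + 2 < p"
    and ode: "p_divisible_poly p ([:0, 1, -1:] * pderiv (F_defect (Suc n) p))"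
  shows "p_divisible_poly p (F_defect (Suc n) p)"
proof (rule p_divisible_poly_of_pderiv[OF p])
  show "p_divisible_poly p (pderiv (F_defect (Suc n) p))"
    using p ode by (rule p_divisible_poly_cancel_x_one_minus_x)
  show "degree (F_defect (Suc n) p) < p"
    using n by (intro degree_F_defect_less) simp
  show "p_divisible p (coeff (F_defect (Suc n) p) 0)"
    unfolding coeff_0_F_defect using p n by (intro esym_inv_p_divisible) auto
qed

lemma F_defect_p_divisible:
  assumes p: "prime p"
  shows "n + 2 < p \<Longrightarrow> p_divisible_poly p (F_defect (Suc n) p)"
proof (induction n)
  case 0
  then have "odd p"
    using p by (intro prime_odd_nat) auto
  then have frobenius:
      "[:1, -1:] ^ p - 1 + monom 1 p = [:1, -1:] ^ p - [:1 ^ p:] - (monom ((-1) ^ p) p :: rat poly)"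
    by (simp add: one_pCons flip: minus_monom)
  have "p_divisible_poly p ([:1, -1:] ^ p - [:1 ^ p:] - monom ((-1) ^ p) p)"
    using p by (intro p_divisible_poly_linear_power p_integral_1 p_integral_uminus)
  then have "p_divisible_poly p ([:0, 1, -1:] * pderiv (F_defect (Suc 0) p))"
    using 0 F_defect_ode_Suc_0[of p] frobenius by simp
  with p 0 show ?case
    by (intro F_defect_p_divisible_of_ode) auto
next
  case (Suc n)
  have "p_integral_poly p [:1, (-1) ^ Suc n - 1:]"
    using p by (intro p_integral_poly_pCons p_integral_poly_0 p_integral_1 p_integral_diff
        p_integral_power p_integral_uminus)
  then have "p_divisible_poly p
      (F_defect (Suc n) p - smult (esym_inv p (Suc n) 1) [:1, (-1) ^ Suc n - 1:])"
    using Suc p esym_inv_p_divisible[OF p, of "Suc n"]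
    by (intro p_divisible_poly_diff p_divisible_poly_smult) simp_all
  moreover have "1 < p"
    using Suc.prems by simp
  ultimately have "p_divisible_poly p ([:0, 1, -1:] * pderiv (F_defect (Suc (Suc n)) p))"
    by (simp only: F_defect_ode_Suc_Suc)
  with p Suc.prems show ?case
    by (rule F_defect_p_divisible_of_ode)
qed

theorem theorem1p2:
  fixes n p :: nat
  assumes "n > 0" and "prime p" and "p > n + 1"
  shows "\<forall>k. p_divisible p
           (coeff (pcompose (F n p) [:1, -1:] - (-1) ^ (n - 1) * F n p) k)"
proof -
  obtain m where n: "n = Suc m"
    using assms(1) gr0_implies_Suc by blast
  have "(-1) ^ j * P = smult ((-1) ^ j) (P :: rat poly)" for j P
    by (induction j) simp_all
  then have "pcompose (F n p) [:1, -1:] - (-1) ^ (n - 1) * F n p = F_defect n p"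
    by (simp add: F_defect_def)
  then show ?thesis
    using F_defect_p_divisible[OF assms(2), of m] assms(3) n by (simp add: p_divisible_poly_def)
qed

end
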